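(* Let $X$, $\partial X$ be Banach spaces, $A_m:D(A_m)\subseteq X\to X$ a closed linear operator, $L\in\mathcal{L}(X,\partial X)$ surjective, and $A_0\subseteq A_m$ with $D(A_0):=D(A_m)\cap\ker(L)$. For $\lambda\in\rho(A_0)$ let $L^{A_m}_\lambda:=(L|_{\ker(\lambda-A_m)})^{-1}\in\mathcal{L}(\partial X,X)$ (this inverse exists and is bounded). Let $P:D(P)\subseteq X\to X$ be relatively $A_m$-bounded, and let $A_0+P$ have domain $D(A_0)$. Then for every $\lambda\in\rho(A_0)\cap\rho(A_0+P)$ the restriction $L|_{\ker(\lambda-A_m-P)}:\ker(\lambda-A_m-P)\to\partial X$ is bijective, its inverse $L^{A_m+P}_\lambda$ belongs to $\mathcal{L}(\partial X,X)$, and $$L^{A_m+P}_\lambda-L^{A_m}_\lambda=R(\lambda,A_0+P)PL^{A_m}_\lambda=R(\lambda,A_0)PL^{A_m+P}_\lambda.$$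
   Context: $P$ relatively $A_m$-bounded means $D(A_m)\subseteq D(P)$ and $\|Pf\|\le a\|A_mf\|+b\|f\|$ for all $f\in D(A_m)$, for some $a,b\ge0$; here $A_m+P$ has domain $D(A_m)$. *)

theory Defs
  imports "HOL-Analysis.Analysis"
begin

text \<open>Complex Banach spaces: real Banach spaces equipped with a compatible
  complex scalar multiplication with norm(c x) = |c| norm(x).\<close>
class cbanach = banach +
  fixes cmult :: "complex \<Rightarrow> 'a \<Rightarrow> 'a"
  assumes cmult_of_real: "cmult (of_real r) x = r *\<^sub>R x"
    and cmult_add_left: "cmult (a + b) x = cmult a x + cmult b x"
    and cmult_add_right: "cmult a (x + y) = cmult a x + cmult a y"
    and cmult_assoc: "cmult a (cmult b x) = cmult (a * b) x"
    and norm_cmult: "norm (cmult a x) = cmod a * norm x"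

definition bounded_clin :: "('a::cbanach \<Rightarrow> 'b::cbanach) \<Rightarrow> bool" where
  "bounded_clin T \<longleftrightarrow> bounded_linear T \<and> (\<forall>c x. T (cmult c x) = cmult c (T x))"

definition lin_op :: "'a::cbanach set \<Rightarrow> ('a \<Rightarrow> 'b::cbanach) \<Rightarrow> bool" where
  "lin_op D T \<longleftrightarrow> 0 \<in> D \<and> (\<forall>x\<in>D. \<forall>y\<in>D. x + y \<in> D) \<and> (\<forall>c. \<forall>x\<in>D. cmult c x \<in> D)
     \<and> (\<forall>x\<in>D. \<forall>y\<in>D. T (x + y) = T x + T y) \<and> (\<forall>c. \<forall>x\<in>D. T (cmult c x) = cmult c (T x))"

definition closed_op :: "'a::cbanach set \<Rightarrow> ('a \<Rightarrow> 'a) \<Rightarrow> bool" where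
  "closed_op D T \<longleftrightarrow> closed {(x, T x) | x. x \<in> D}"

definition eig_space :: "complex \<Rightarrow> 'a::cbanach set \<Rightarrow> ('a \<Rightarrow> 'a) \<Rightarrow> 'a set" where
  "eig_space lam D T = {x \<in> D. cmult lam x - T x = 0}"

definition resolvent :: "complex \<Rightarrow> 'a::cbanach set \<Rightarrow> ('a \<Rightarrow> 'a) \<Rightarrow> 'a \<Rightarrow> 'a" where
  "resolvent lam D T = inv_into D (\<lambda>x. cmult lam x - T x)"

definition resolvent_set :: "'a::cbanach set \<Rightarrow> ('a \<Rightarrow> 'a) \<Rightarrow> complex set" where
  "resolvent_set D T = {lam. bij_betw (\<lambda>x. cmult lam x - T x) D UNIV
                              \<and> bounded_clin (resolvent lam D T)}"

definition dirichlet_op :: "('a::cbanach \<Rightarrow> 'b::cbanach) \<Rightarrow> 'a set \<Rightarrow> ('a \<Rightarrow> 'a) \<Rightarrow> complex \<Rightarrow> 'b \<Rightarrow> 'a" where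
  "dirichlet_op L D T lam = inv_into (eig_space lam D T) L"

definition rel_bounded :: "'a::cbanach set \<Rightarrow> ('a \<Rightarrow> 'a) \<Rightarrow> 'a set \<Rightarrow> ('a \<Rightarrow> 'a) \<Rightarrow> bool" where
  "rel_bounded D T DP P \<longleftrightarrow> D \<subseteq> DP \<and>
     (\<exists>a b. a \<ge> 0 \<and> b \<ge> 0 \<and> (\<forall>f\<in>D. norm (P f) \<le> a * norm (T f) + b * norm f))"

end

theory Submission
  imports Defs
begin

text \<open>Write \<open>L\<^sub>0\<close>, \<open>L\<^sub>P\<close> for the Dirichlet operators of \<open>A\<^sub>m\<close> and \<open>A\<^sub>m + P\<close>. On the
  range of \<open>L\<^sub>0\<close> we have \<open>A\<^sub>m = \<lambda>\<close>, so the relative bound makes \<open>P L\<^sub>0\<close> bounded, and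
  \<open>L\<^sub>0 y + R(\<lambda>, A\<^sub>0 + P) P L\<^sub>0 y\<close> is an element of \<open>ker(\<lambda> - A\<^sub>m - P)\<close> with boundary value
  \<open>y\<close>; it is the only one, since two such elements differ by a vector of \<open>D(A\<^sub>0)\<close> annihilated
  by the injective map \<open>\<lambda> - A\<^sub>0 - P\<close>. This gives bijectivity, boundedness and the first
  identity. For the second, \<open>L\<^sub>P y - L\<^sub>0 y\<close> lies in \<open>D(A\<^sub>0)\<close> and is mapped by \<open>\<lambda> - A\<^sub>m\<close>
  to \<open>P L\<^sub>P y\<close>.\<close>

lemma cmult_zero_right: "cmult c (0::'a::cbanach) = 0"
  using cmult_add_right[of c "0::'a" 0] by simp

lemma cmult_diff_right: "cmult c ((x::'a::cbanach) - y) = cmult c x - cmult c y"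
  using cmult_add_right[of c "x - y" y] by (simp add: algebra_simps)

lemma cmult_minus_one: "cmult (-1) (x::'a::cbanach) = - x"
  using cmult_of_real[of "-1" x] by simp

lemma lin_op_zero: "lin_op D T \<Longrightarrow> T 0 = 0"
  unfolding lin_op_def by (metis add_cancel_right_right)

lemma lin_op_add:
  assumes "lin_op D T" "x \<in> D" "y \<in> D"
  shows "x + y \<in> D" "T (x + y) = T x + T y"
  using assms unfolding lin_op_def by blast+

lemma lin_op_diff:
  assumes "lin_op D T" "x \<in> D" "y \<in> D"
  shows "x - y \<in> D" "T (x - y) = T x - T y"
proof -
  have "cmult (-1) y \<in> D" "T (cmult (-1) y) = - T y"
    using assms cmult_minus_one unfolding lin_op_def by metis+
  then show "x - y \<in> D" "T (x - y) = T x - T y"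
    using lin_op_add[OF assms(1,2), of "cmult (-1) y"] by (simp_all add: cmult_minus_one)
qed

lemma lin_op_plus:
  assumes "lin_op D A" "lin_op DP P" "D \<subseteq> DP"
  shows "lin_op D (\<lambda>x. A x + P x)"
  using assms unfolding lin_op_def by (auto simp: subset_iff cmult_add_right)

lemma lin_op_shifted_add:
  assumes "lin_op D T" "x \<in> D" "y \<in> D"
  shows "cmult lam (x + y) - T (x + y) = (cmult lam x - T x) + (cmult lam y - T y)"
  using lin_op_add[OF assms] by (simp add: cmult_add_right)

lemma lin_op_shifted_diff:
  assumes "lin_op D T" "x \<in> D" "y \<in> D"
  shows "cmult lam (x - y) - T (x - y) = (cmult lam x - T x) - (cmult lam y - T y)"
  using lin_op_diff[OF assms] by (simp add: cmult_diff_right)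

lemma bounded_clin_compose: "bounded_clin f \<Longrightarrow> bounded_clin g \<Longrightarrow> bounded_clin (\<lambda>x. f (g x))"
  unfolding bounded_clin_def using bounded_linear_compose[of f g] by auto

lemma bounded_clin_add: "bounded_clin f \<Longrightarrow> bounded_clin g \<Longrightarrow> bounded_clin (\<lambda>x. f x + g x)"
  unfolding bounded_clin_def using bounded_linear_add[of f g] by (auto simp: cmult_add_right)

lemma bounded_clin_compose_lin_op:
  assumes u: "bounded_clin u" and P: "lin_op DP P" and range: "range u \<subseteq> DP"
    and bound: "\<And>y. norm (P (u y)) \<le> C * norm (u y)" and "C \<ge> 0"
  shows "bounded_clin (\<lambda>y. P (u y))"
proof -
  have u_lin: "bounded_linear u" and u_cmult: "\<And>c y. u (cmult c y) = cmult c (u y)"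
    using u unfolding bounded_clin_def by auto
  obtain K where K: "\<And>y. norm (u y) \<le> norm y * K"
    using bounded_linear.bounded[OF u_lin] by blast
  have u_DP: "u y \<in> DP" for y
    using range by blast
  have P_cmult: "P (u (cmult c y)) = cmult c (P (u y))" for c y
    using P u_DP[of y] unfolding lin_op_def u_cmult by blast
  have "bounded_linear (\<lambda>y. P (u y))"
  proof (rule bounded_linear_intro)
    show "P (u (x + y)) = P (u x) + P (u y)" for x y
      using lin_op_add(2)[OF P u_DP u_DP] linear_add[OF bounded_linear.linear[OF u_lin]] by simp
    show "P (u (r *\<^sub>R x)) = r *\<^sub>R P (u x)" for r x
      using P_cmult[of "of_real r" x] by (simp add: cmult_of_real)
    show "norm (P (u x)) \<le> norm x * (C * K)" for x
      using bound[of x] mult_left_mono[OF K[of x] \<open>C \<ge> 0\<close>] by (simp add: algebra_simps)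
  qed
  then show ?thesis
    unfolding bounded_clin_def using P_cmult by blast
qed

lemma resolvent_in_domain:
  "lam \<in> resolvent_set D T \<Longrightarrow> resolvent lam D T z \<in> D"
  unfolding resolvent_set_def resolvent_def bij_betw_def by (auto intro: inv_into_into)

lemma resolvent_right_inverse:
  "lam \<in> resolvent_set D T \<Longrightarrow> cmult lam (resolvent lam D T z) - T (resolvent lam D T z) = z"
  unfolding resolvent_set_def resolvent_def bij_betw_def
  by (auto intro: f_inv_into_f[where f = "\<lambda>x. cmult lam x - T x"])

lemma resolvent_left_inverse:
  "lam \<in> resolvent_set D T \<Longrightarrow> x \<in> D \<Longrightarrow> resolvent lam D T (cmult lam x - T x) = x"
  unfolding resolvent_set_def resolvent_def bij_betw_def by (auto intro: inv_into_f_f)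

lemma dirichlet_op_in_eig_space:
  "bij_betw L (eig_space lam D T) UNIV \<Longrightarrow> dirichlet_op L D T lam y \<in> eig_space lam D T"
  unfolding dirichlet_op_def bij_betw_def by (auto intro: inv_into_into)

lemma dirichlet_op_right_inverse:
  "bij_betw L (eig_space lam D T) UNIV \<Longrightarrow> L (dirichlet_op L D T lam y) = y"
  unfolding dirichlet_op_def bij_betw_def by (auto intro: f_inv_into_f)

lemma dirichlet_op_eqI:
  "inj_on L (eig_space lam D T) \<Longrightarrow> x \<in> eig_space lam D T \<Longrightarrow> L x = y \<Longrightarrow> dirichlet_op L D T lam y = x"
  unfolding dirichlet_op_def by (rule inv_into_f_eq)

lemma inj_on_eig_space:
  assumes T: "lin_op D T" and L: "linear L"
    and lam: "lam \<in> resolvent_set (D \<inter> {x. L x = 0}) T"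
  shows "inj_on L (eig_space lam D T)"
proof (rule inj_onI)
  fix x1 x2 assume x: "x1 \<in> eig_space lam D T" "x2 \<in> eig_space lam D T" "L x1 = L x2"
  then have in_D: "x1 \<in> D" "x2 \<in> D"
    by (auto simp: eig_space_def)
  have "x1 - x2 \<in> D \<inter> {x. L x = 0}"
    using lin_op_diff(1)[OF T in_D] x(3) linear_diff[OF L] by simp
  moreover have "cmult lam (x1 - x2) - T (x1 - x2) = 0"
    using lin_op_shifted_diff[OF T in_D] x(1,2) by (simp add: eig_space_def)
  ultimately have "x1 - x2 = resolvent lam (D \<inter> {x. L x = 0}) T 0"
    using resolvent_left_inverse[OF lam] by metis
  moreover have "resolvent lam (D \<inter> {x. L x = 0}) T 0 = 0"
    using resolvent_left_inverse[OF lam, of 0] T linear_0[OF L]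
    by (simp add: lin_op_zero cmult_zero_right lin_op_def)
  ultimately show "x1 = x2"
    by simp
qed

context
  fixes A :: "'x::cbanach \<Rightarrow> 'x" and D :: "'x set" and P :: "'x \<Rightarrow> 'x" and DP :: "'x set"
    and L :: "'x \<Rightarrow> 'y::cbanach" and lam :: complex
  assumes A: "lin_op D A" and P: "lin_op DP P" and D_DP: "D \<subseteq> DP" and L: "linear L"
begin

lemma eig_space_perturbation:
  assumes u: "u \<in> eig_space lam D A" and r: "r \<in> D" "cmult lam r - (A r + P r) = P u"
  shows "u + r \<in> eig_space lam D (\<lambda>x. A x + P x)"
proof -
  have u_D: "u \<in> D" and "cmult lam u - (A u + P u) = - P u"
    using u by (auto simp: eig_space_def)
  then show ?thesis
    using lin_op_shifted_add[OF lin_op_plus[OF A P D_DP] u_D r(1), of lam] lin_op_add(1)[OF A u_D r(1)] r(2)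
    by (simp add: eig_space_def)
qed

lemma dirichlet_op_perturbation:
  assumes A0: "bij_betw L (eig_space lam D A) UNIV"
    and AP0: "lam \<in> resolvent_set (D \<inter> {x. L x = 0}) (\<lambda>x. A x + P x)"
  defines "RP \<equiv> resolvent lam (D \<inter> {x. L x = 0}) (\<lambda>x. A x + P x)"
  shows "bij_betw L (eig_space lam D (\<lambda>x. A x + P x)) UNIV"
    and "dirichlet_op L D (\<lambda>x. A x + P x) lam y
           = dirichlet_op L D A lam y + RP (P (dirichlet_op L D A lam y))"
proof -
  let ?u = "dirichlet_op L D A lam"
  let ?w = "\<lambda>y. ?u y + RP (P (?u y))"
  have RP_D0: "RP z \<in> D \<inter> {x. L x = 0}" for z
    unfolding RP_def by (rule resolvent_in_domain[OF AP0])
  have w_eig: "?w y \<in> eig_space lam D (\<lambda>x. A x + P x)" for y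
    using eig_space_perturbation[OF dirichlet_op_in_eig_space[OF A0]] RP_D0
      resolvent_right_inverse[OF AP0] unfolding RP_def by blast
  have L_w: "L (?w y) = y" for y
    using RP_D0 dirichlet_op_right_inverse[OF A0] linear_add[OF L] by simp
  have inj: "inj_on L (eig_space lam D (\<lambda>x. A x + P x))"
    by (rule inj_on_eig_space[OF lin_op_plus[OF A P D_DP] L AP0])
  show "bij_betw L (eig_space lam D (\<lambda>x. A x + P x)) UNIV"
    unfolding bij_betw_def using inj w_eig L_w by (metis UNIV_eq_I imageI)
  show "dirichlet_op L D (\<lambda>x. A x + P x) lam y = ?w y"
    by (rule dirichlet_op_eqI[OF inj w_eig L_w])
qed

lemma dirichlet_op_difference:
  assumes u: "u \<in> eig_space lam D A" and v: "v \<in> eig_space lam D (\<lambda>x. A x + P x)"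
    and L_eq: "L u = L v" and A0: "lam \<in> resolvent_set (D \<inter> {x. L x = 0}) A"
  shows "v - u = resolvent lam (D \<inter> {x. L x = 0}) A (P v)"
proof -
  have in_D: "v \<in> D" "u \<in> D"
    using u v by (auto simp: eig_space_def)
  have "v - u \<in> D \<inter> {x. L x = 0}"
    using lin_op_diff(1)[OF A in_D] L_eq linear_diff[OF L] by simp
  moreover have "cmult lam (v - u) - A (v - u) = P v"
    using lin_op_shifted_diff[OF A in_D, of lam] u v by (simp add: eig_space_def algebra_simps)
  ultimately show ?thesis
    using resolvent_left_inverse[OF A0] by metis
qed

end

lemma rel_bounded_on_eig_space:
  assumes "rel_bounded D A DP P"
  obtains C where "C \<ge> 0" "\<And>x. x \<in> eig_space lam D A \<Longrightarrow> norm (P x) \<le> C * norm x"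
proof -
  obtain a b where ab: "a \<ge> 0" "b \<ge> 0" "\<And>f. f \<in> D \<Longrightarrow> norm (P f) \<le> a * norm (A f) + b * norm f"
    using assms unfolding rel_bounded_def by blast
  have bound: "norm (P x) \<le> (a * cmod lam + b) * norm x" if "x \<in> eig_space lam D A" for x
  proof -
    have "x \<in> D" "A x = cmult lam x"
      using that by (auto simp: eig_space_def)
    then show ?thesis
      using ab(3)[of x] by (simp add: norm_cmult algebra_simps)
  qed
  have "a * cmod lam + b \<ge> 0"
    using ab by simp
  then show ?thesis
    using bound by (rule that)
qed

theorem lemma4p6:
  fixes Am :: "'x::cbanach \<Rightarrow> 'x" and DAm :: "'x set"
    and L :: "'x \<Rightarrow> 'y::cbanach"
    and P :: "'x \<Rightarrow> 'x" and DP :: "'x set"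
    and lam :: complex
  assumes Am_lin: "lin_op DAm Am"
    and Am_closed: "closed_op DAm Am"
    and L_bdd: "bounded_clin L"
    and L_surj: "surj L"
    and dirichlet: "\<And>mu. mu \<in> resolvent_set (DAm \<inter> {x. L x = 0}) Am \<Longrightarrow>
             bij_betw L (eig_space mu DAm Am) UNIV \<and> bounded_clin (dirichlet_op L DAm Am mu)"
    and P_lin: "lin_op DP P"
    and P_relbdd: "rel_bounded DAm Am DP P"
    and lam0: "lam \<in> resolvent_set (DAm \<inter> {x. L x = 0}) Am"
    and lamP: "lam \<in> resolvent_set (DAm \<inter> {x. L x = 0}) (\<lambda>x. Am x + P x)"
  shows "bij_betw L (eig_space lam DAm (\<lambda>x. Am x + P x)) UNIV
       \<and> bounded_clin (dirichlet_op L DAm (\<lambda>x. Am x + P x) lam)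
       \<and> (\<forall>y. dirichlet_op L DAm (\<lambda>x. Am x + P x) lam y - dirichlet_op L DAm Am lam y
              = resolvent lam (DAm \<inter> {x. L x = 0}) (\<lambda>x. Am x + P x) (P (dirichlet_op L DAm Am lam y)))
       \<and> (\<forall>y. dirichlet_op L DAm (\<lambda>x. Am x + P x) lam y - dirichlet_op L DAm Am lam y
              = resolvent lam (DAm \<inter> {x. L x = 0}) Am (P (dirichlet_op L DAm (\<lambda>x. Am x + P x) lam y)))"
proof -
  let ?u = "dirichlet_op L DAm Am lam" and ?v = "dirichlet_op L DAm (\<lambda>x. Am x + P x) lam"
  let ?RP = "resolvent lam (DAm \<inter> {x. L x = 0}) (\<lambda>x. Am x + P x)"
  have D_DP: "DAm \<subseteq> DP" and L: "linear L"
    using P_relbdd L_bdd by (auto simp: rel_bounded_def bounded_clin_def bounded_linear.linear)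
  have u_bij: "bij_betw L (eig_space lam DAm Am) UNIV" and u_bdd: "bounded_clin ?u"
    using dirichlet[OF lam0] by auto
  note perturbation = dirichlet_op_perturbation[OF Am_lin P_lin D_DP L u_bij lamP]
  have v_eq: "?v = (\<lambda>y. ?u y + ?RP (P (?u y)))"
    by (rule ext) (rule perturbation(2))
  have u_eig: "?u y \<in> eig_space lam DAm Am" for y
    by (rule dirichlet_op_in_eig_space[OF u_bij])
  obtain C where "C \<ge> 0" "\<And>x. x \<in> eig_space lam DAm Am \<Longrightarrow> norm (P x) \<le> C * norm x"
    using rel_bounded_on_eig_space[OF P_relbdd] by blast
  moreover have "range ?u \<subseteq> DP"
    using u_eig D_DP by (auto simp: eig_space_def)
  ultimately have Pu_bdd: "bounded_clin (\<lambda>y. P (?u y))"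
    using bounded_clin_compose_lin_op[OF u_bdd P_lin] u_eig by blast
  have RP_bdd: "bounded_clin ?RP"
    using lamP by (simp add: resolvent_set_def)
  show ?thesis
  proof (intro conjI allI)
    show "bij_betw L (eig_space lam DAm (\<lambda>x. Am x + P x)) UNIV"
      by (rule perturbation(1))
    show "bounded_clin ?v"
      unfolding v_eq by (rule bounded_clin_add[OF u_bdd bounded_clin_compose[OF RP_bdd Pu_bdd]])
    show "?v y - ?u y = ?RP (P (?u y))" for y
      by (simp add: v_eq)
    show "?v y - ?u y = resolvent lam (DAm \<inter> {x. L x = 0}) Am (P (?v y))" for y
      by (rule dirichlet_op_difference[OF Am_lin P_lin D_DP L u_eig
            dirichlet_op_in_eig_space[OF perturbation(1)] _ lam0])
        (simp add: dirichlet_op_right_inverse[OF u_bij] dirichlet_op_right_inverse[OF perturbation(1)])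
  qed
qed

end
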